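(* Let $G$ be a connected threshold graph of order $n\ge 4$ and size $m$ with $n-1<m<\binom{n}{2}$, let $c$ be its number of type 1 vertices, $(b_1,\ldots,b_z)$ its backwards zero position sequence and $F_1=\sum_{i=1}^z b_i^2$. Let $\xi\in\mathbb{R}$ be the greatest real root of $P(x)=x^3-(c+1)x^2+cx-F_1$. Then $\xi$ is a simple root of $P$ and $|\xi|>|\eta|$ for every other (complex) root $\eta$ of $P$.
   Context: A threshold graph is a simple graph whose vertices can be ordered $v_1,\ldots,v_n$ so that for each $2\le i\le n$, $v_i$ is either adjacent to all of $v_1,\ldots,v_{i-1}$ (then $a_i=1$) or to none of them (then $a_i=0$); by convention $a_1=1$. Vertex $v_i$ is of type 1 if $a_i=1$ and of type 0 if $a_i=0$; $c$ and $z$ are the numbers of type 1 and type 0 vertices (here $c \ge 3$, $z\ge 1$). The backwards zero position sequence $(b_1,\ldots,b_z)$ is defined by letting $b_i$ be the number of type 1 vertices appearing after the $i$-th type 0 vertex in the order $v_1,\ldots,v_n$. *)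

theory Defs
  imports Complex_Main "HOL-Computational_Algebra.Polynomial"
begin

definition simple_graph :: "'a set \<Rightarrow> ('a \<Rightarrow> 'a \<Rightarrow> bool) \<Rightarrow> bool" where
  "simple_graph V E \<longleftrightarrow> finite V \<and> (\<forall>x y. E x y \<longrightarrow> x \<in> V \<and> y \<in> V)
     \<and> (\<forall>x y. E x y \<longrightarrow> E y x) \<and> (\<forall>x. \<not> E x x)"

definition graph_connected :: "'a set \<Rightarrow> ('a \<Rightarrow> 'a \<Rightarrow> bool) \<Rightarrow> bool" where
  "graph_connected V E \<longleftrightarrow> (\<forall>x\<in>V. \<forall>y\<in>V. E\<^sup>*\<^sup>* x y)"

definition graph_size :: "'a set \<Rightarrow> ('a \<Rightarrow> 'a \<Rightarrow> bool) \<Rightarrow> nat" where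
  "graph_size V E = card {{x, y} | x y. x \<in> V \<and> y \<in> V \<and> E x y}"

text \<open>Creation ordering of a threshold graph (0-indexed): the list vs enumerates V
  without repetition, a!i is the type of vertex vs!i, and vs!i is adjacent to all
  earlier vertices if a!i and to none of them otherwise.\<close>
definition threshold_order ::
  "'a set \<Rightarrow> ('a \<Rightarrow> 'a \<Rightarrow> bool) \<Rightarrow> 'a list \<Rightarrow> bool list \<Rightarrow> bool" where
  "threshold_order V E vs a \<longleftrightarrow> distinct vs \<and> set vs = V \<and> length a = length vs
     \<and> (length a > 0 \<longrightarrow> a ! 0)
     \<and> (\<forall>i < length vs. \<forall>j < i. E (vs ! i) (vs ! j) = a ! i)"

definition type1_count :: "bool list \<Rightarrow> nat" where
  "type1_count a = card {i. i < length a \<and> a ! i}"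

text \<open>b-value of a type 0 vertex at position p: number of type 1 vertices after it.\<close>
definition bwd_zero :: "bool list \<Rightarrow> nat \<Rightarrow> nat" where
  "bwd_zero a p = card {j. p < j \<and> j < length a \<and> a ! j}"

definition F1 :: "bool list \<Rightarrow> nat" where
  "F1 a = (\<Sum>p \<in> {p. p < length a \<and> \<not> a ! p}. (bwd_zero a p)^2)"

end

theory Submission
  imports Defs
begin

text \<open>
  The polynomial is \<open>P(x) = x(x - 1)(x - c) - F\<^sub>1\<close> with \<open>F\<^sub>1 \<ge> 0\<close>, and \<open>c \<ge> 2\<close> because
  in a connected threshold graph both the first and the last vertex have type 1.
  Since \<open>P(c) \<le> 0\<close>, the greatest real root satisfies \<open>\<xi> \<ge> c\<close>, where \<open>P'(\<xi>) > 0\<close>; hence \<open>\<xi>\<close>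
  is simple. Dividing \<open>P\<close> by \<open>x - \<xi>\<close> leaves \<open>x\<^sup>2 + (\<xi> - c - 1)x + (\<xi> - 1)(\<xi> - c)\<close>.
  Its real roots are real roots of \<open>P\<close>, which lie in \<open>[0, \<xi>]\<close> as \<open>P < 0\<close> on the negative
  reals; a non-real pair of roots has squared modulus \<open>(\<xi> - 1)(\<xi> - c) < \<xi>\<^sup>2\<close>.
\<close>

lemma poly_map_poly_of_real:
  fixes p :: "real poly"
  shows "poly (map_poly of_real p) (of_real x)
    = (of_real (poly p x) :: 'a::{real_algebra_1, comm_semiring_0})"
  by (induction p) (auto simp: map_poly_pCons)

lemma poly_cubic_eq:
  fixes c F x :: "'a::comm_ring_1"
  shows "poly [:- F, c, - (c + 1), 1:] x = x * (x - 1) * (x - c) - F"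
  by (simp add: algebra_simps)

lemma poly_map_of_real_cubic_eq:
  fixes c F :: real and z :: complex
  shows "poly (map_poly complex_of_real [:- F, c, - (c + 1), 1:]) z
    = z * (z - 1) * (z - of_real c) - of_real F"
  by (simp add: map_poly_pCons algebra_simps)

lemma cubic_other_root:
  fixes c F r z :: "'a::idom"
  assumes "r * (r - 1) * (r - c) = F" and "z * (z - 1) * (z - c) = F" and "z \<noteq> r"
  shows "z\<^sup>2 + (r - c - 1) * z + (r - 1) * (r - c) = 0"
proof -
  have "(z - r) * (z\<^sup>2 + (r - c - 1) * z + (r - 1) * (r - c))
      = z * (z - 1) * (z - c) - r * (r - 1) * (r - c)"
    by (simp add: algebra_simps power2_eq_square)
  then show ?thesis
    using assms by simp
qed

lemma cmod_power2_nonreal_root: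
  fixes B C :: real and z :: complex
  assumes "z\<^sup>2 + of_real B * z + of_real C = 0" and "Im z \<noteq> 0"
  shows "cmod z ^ 2 = C"
proof -
  have re: "Re z ^ 2 - Im z ^ 2 + B * Re z + C = 0"
    and im: "(2 * Re z + B) * Im z = 0"
    using arg_cong[OF assms(1), of Re] arg_cong[OF assms(1), of Im]
    by (simp_all add: power2_eq_square algebra_simps)
  from im have "B = - 2 * Re z"
    using assms(2) by simp
  with re have "Re z ^ 2 + Im z ^ 2 = C"
    by (simp add: power2_eq_square algebra_simps)
  then show ?thesis
    by (simp add: cmod_power2)
qed

lemma cubic_real_root_nonneg:
  fixes c F x :: real
  assumes "0 \<le> c" and "0 \<le> F" and "poly [:- F, c, - (c + 1), 1:] x = 0"
  shows "0 \<le> x"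
proof (rule ccontr)
  assume "\<not> 0 \<le> x"
  then have "0 < x * (x - 1)"
    by (simp add: mult_neg_neg)
  then have "x * (x - 1) * (x - c) < 0"
    using \<open>\<not> 0 \<le> x\<close> \<open>0 \<le> c\<close> by (simp add: mult_pos_neg)
  then show False
    using assms(2,3) unfolding poly_cubic_eq by linarith
qed

lemma cubic_greatest_root_ge:
  fixes c F \<xi> :: real
  assumes "1 \<le> c" and "0 \<le> F"
    and greatest: "\<forall>x. poly [:- F, c, - (c + 1), 1:] x = 0 \<longrightarrow> x \<le> \<xi>"
  shows "c \<le> \<xi>"
proof -
  let ?p = "[:- F, c, - (c + 1), 1:]"
  let ?x = "c + 1 + F"
  have "poly ?p c \<le> 0"
    using \<open>0 \<le> F\<close> by (simp add: poly_cubic_eq)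
  moreover have "0 < poly ?p ?x"
  proof -
    have "1 \<le> ?x * (c + F)"
      using assms(1,2) mult_mono[of 1 ?x 1 "c + F"] by simp
    then have "1 + F \<le> ?x * (c + F) * (1 + F)"
      using \<open>0 \<le> F\<close> mult_right_mono[of 1 _ "1 + F"] by simp
    then show ?thesis
      by (simp add: poly_cubic_eq algebra_simps)
  qed
  moreover have "c < ?x"
    using \<open>0 \<le> F\<close> by simp
  ultimately obtain x where "c \<le> x" and "poly ?p x = 0"
    using poly_IVT_pos[of c ?x ?p] by (metis less_eq_real_def)
  then show ?thesis
    using greatest by fastforce
qed

lemma order_cubic_root_eq_1:
  fixes c F \<xi> :: real
  assumes "2 \<le> c" and "c \<le> \<xi>" and root: "poly [:- F, c, - (c + 1), 1:] \<xi> = 0"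
  shows "order \<xi> [:- F, c, - (c + 1), 1:] = 1"
proof -
  let ?p = "[:- F, c, - (c + 1), 1:]"
  have "poly (pderiv ?p) \<xi> = \<xi> * (3 * \<xi> - 2 * c - 2) + c"
    by (simp add: pderiv_pCons algebra_simps)
  moreover have "0 \<le> \<xi> * (3 * \<xi> - 2 * c - 2)"
    using assms(1,2) by simp
  ultimately have "poly (pderiv ?p) \<xi> \<noteq> 0"
    using assms(1) by linarith
  then have "order \<xi> (pderiv ?p) = 0"
    by (simp add: order_0I)
  then show ?thesis
    using order_pderiv[of ?p \<xi>] root by simp
qed

lemma cmod_cubic_root_less_greatest:
  fixes c F \<xi> :: real and \<eta> :: complex
  assumes "0 < c" and "0 \<le> F" and "c \<le> \<xi>"
    and root: "poly [:- F, c, - (c + 1), 1:] \<xi> = 0"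
    and greatest: "\<forall>x. poly [:- F, c, - (c + 1), 1:] x = 0 \<longrightarrow> x \<le> \<xi>"
    and root_\<eta>: "poly (map_poly complex_of_real [:- F, c, - (c + 1), 1:]) \<eta> = 0"
    and "\<eta> \<noteq> complex_of_real \<xi>"
  shows "cmod \<eta> < \<bar>\<xi>\<bar>"
proof (cases "Im \<eta> = 0")
  case True
  then obtain x where x: "\<eta> = of_real x"
    using complex_is_Real_iff by (metis Reals_cases)
  then have "poly [:- F, c, - (c + 1), 1:] x = 0"
    using root_\<eta> by (simp only: poly_map_poly_of_real of_real_eq_0_iff)
  then have "0 \<le> x" and "x \<le> \<xi>"
    using cubic_real_root_nonneg[of c F x] assms(1,2) greatest by auto
  moreover have "x \<noteq> \<xi>"
    using x \<open>\<eta> \<noteq> complex_of_real \<xi>\<close> by blast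
  ultimately show ?thesis
    using x by simp
next
  case False
  have "poly (map_poly complex_of_real [:- F, c, - (c + 1), 1:]) (of_real \<xi>) = 0"
    using root by (simp only: poly_map_poly_of_real of_real_0)
  then have "of_real \<xi> * (of_real \<xi> - 1) * (of_real \<xi> - of_real c) = complex_of_real F"
    by (simp only: poly_map_of_real_cubic_eq right_minus_eq)
  moreover have "\<eta> * (\<eta> - 1) * (\<eta> - of_real c) = of_real F"
    using root_\<eta> by (simp only: poly_map_of_real_cubic_eq right_minus_eq)
  ultimately have "\<eta>\<^sup>2 + of_real (\<xi> - c - 1) * \<eta> + of_real ((\<xi> - 1) * (\<xi> - c)) = 0"
    using cubic_other_root[of "of_real \<xi>" "of_real c" "of_real F" \<eta>] \<open>\<eta> \<noteq> complex_of_real \<xi>\<close>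
    by simp
  then have "cmod \<eta> ^ 2 = (\<xi> - 1) * (\<xi> - c)"
    using cmod_power2_nonreal_root False by blast
  also have "\<dots> < \<xi>\<^sup>2"
  proof -
    have "0 < \<xi> * c"
      using assms(1,3) by simp
    then show ?thesis
      using assms(3) by (simp add: algebra_simps power2_eq_square)
  qed
  finally show ?thesis
    using assms(1,3) by (simp add: power_less_imp_less_base)
qed

lemma threshold_order_last_type1:
  assumes "simple_graph V E" and "threshold_order V E vs a"
    and "graph_connected V E" and "2 \<le> length vs"
  shows "a ! (length vs - 1)"
proof -
  let ?n = "length vs"
  let ?v = "vs ! (?n - 1)"
  have "distinct vs" and "set vs = V"
    and adj: "\<forall>i < ?n. \<forall>j < i. E (vs ! i) (vs ! j) = a ! i"
    using assms(2) unfolding threshold_order_def by auto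
  have "?v \<in> V" and "vs ! 0 \<in> V"
    using \<open>set vs = V\<close> assms(4) by (auto intro!: nth_mem)
  moreover have "?v \<noteq> vs ! 0"
    using nth_eq_iff_index_eq[OF \<open>distinct vs\<close>, of "?n - 1" 0] assms(4) by force
  ultimately have "E\<^sup>*\<^sup>* ?v (vs ! 0)"
    using assms(3) unfolding graph_connected_def by blast
  then obtain y where "E ?v y"
    using \<open>?v \<noteq> vs ! 0\<close> by (metis converse_rtranclpE)
  moreover have "y \<in> V" and "y \<noteq> ?v"
    using \<open>E ?v y\<close> assms(1) unfolding simple_graph_def by auto
  moreover obtain j where "j < ?n" and "y = vs ! j"
    using \<open>y \<in> V\<close> \<open>set vs = V\<close> by (metis in_set_conv_nth)
  ultimately have "j \<noteq> ?n - 1" and "E ?v (vs ! j)"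
    by auto
  then have "j < ?n - 1"
    using \<open>j < ?n\<close> by linarith
  then show ?thesis
    using adj \<open>E ?v (vs ! j)\<close> assms(4) by auto
qed

lemma type1_count_ge_2:
  assumes "simple_graph V E" and "threshold_order V E vs a"
    and "graph_connected V E" and "2 \<le> length vs"
  shows "2 \<le> type1_count a"
proof -
  let ?n = "length vs"
  have "length a = ?n" and "a ! 0"
    using assms(2,4) unfolding threshold_order_def by auto
  moreover have "a ! (?n - 1)"
    using threshold_order_last_type1[OF assms] .
  ultimately have "{0, ?n - 1} \<subseteq> {i. i < length a \<and> a ! i}"
    using assms(4) by auto
  then have "card {0, ?n - 1} \<le> type1_count a"
    unfolding type1_count_def by (intro card_mono) auto
  then show ?thesis
    using assms(4) by simp
qed

theorem lemma4p3:
  fixes V :: "'a set" and E :: "'a \<Rightarrow> 'a \<Rightarrow> bool"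
    and vs :: "'a list" and a :: "bool list" and \<xi> :: real
  assumes "simple_graph V E"
    and "threshold_order V E vs a"
    and "graph_connected V E"
    and "card V \<ge> 4"
    and "card V - 1 < graph_size V E"
    and "graph_size V E < card V choose 2"
    and "poly [:- real (F1 a), real (type1_count a), - (real (type1_count a) + 1), 1:] \<xi> = 0"
    and "\<forall>x::real. poly [:- real (F1 a), real (type1_count a), - (real (type1_count a) + 1), 1:] x = 0 \<longrightarrow> x \<le> \<xi>"
  shows "order \<xi> [:- real (F1 a), real (type1_count a), - (real (type1_count a) + 1), 1:] = 1
    \<and> (\<forall>\<eta>::complex. poly (map_poly complex_of_real
          [:- real (F1 a), real (type1_count a), - (real (type1_count a) + 1), 1:]) \<eta> = 0
        \<and> \<eta> \<noteq> complex_of_real \<xi> \<longrightarrow> cmod \<eta> < \<bar>\<xi>\<bar>)"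
proof -
  let ?c = "real (type1_count a)" and ?F = "real (F1 a)"
  have "card V = length vs"
    using assms(2) distinct_card unfolding threshold_order_def by metis
  then have "2 \<le> ?c"
    using type1_count_ge_2[OF assms(1-3)] assms(4) by simp
  moreover have "?c \<le> \<xi>"
    using cubic_greatest_root_ge[of ?c ?F \<xi>] calculation assms(8) by simp
  ultimately show ?thesis
    using order_cubic_root_eq_1[of ?c \<xi> ?F] cmod_cubic_root_less_greatest[of ?c ?F \<xi>] assms(7,8)
    by simp
qed

end
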